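(* Let $c\in\mathbb{C}$ with $|c|>1$, let $r=\sqrt{|c|^2-1}$, and define $\tau\colon S^1\to S^1$ (where $S^1=\{z\in\mathbb{C}:|z|=1\}$) by $\tau(z)=\dfrac{r^2}{\bar z-\bar c}+c$ if $|z-c|>r$ and $\tau(z)=z$ otherwise. Then for all $x,y\in S^1$, $$|\tau(x)-\tau(y)|\le\min\!\Big(1,\frac{r}{|x-c|}\Big)\min\!\Big(1,\frac{r}{|y-c|}\Big)|x-y|\le|x-y|.$$
   Context: In the Poincaré disk model $\mathbb{D}=\{|z|<1\}$ of the hyperbolic plane, $\{z\in\mathbb{D}:|z-c|=r\}$ is a hyperbolic line not through $0$, and $\tau$ is the one-way reflection in it (reflecting points on the same side as $0$), restricted to the boundary circle $S^1$. *)

theory Defs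
  imports "HOL-Analysis.Analysis"
begin

definition refl_radius :: "complex \<Rightarrow> real" where
  "refl_radius c = sqrt ((cmod c)\<^sup>2 - 1)"

definition tau :: "complex \<Rightarrow> complex \<Rightarrow> complex" where
  "tau c z = (if cmod (z - c) > refl_radius c
              then complex_of_real ((refl_radius c)\<^sup>2) / (cnj z - cnj c) + c
              else z)"

end

theory Submission imports Defs begin

text \<open>After translating by \<open>c\<close>, \<open>tau c\<close> is the fold \<open>sphere_fold r\<close> that inverts the points
  outside the circle \<open>|w| = r\<close> and fixes the others; nothing about the unit circle is used
  except that it avoids \<open>c\<close>. Inversion scales distances exactly:
  \<open>|a\<^sup>* - b\<^sup>*| = r\<^sup>2 |a - b| / (|a| |b|)\<close>. For \<open>a\<close> outside and \<open>b\<close> inside write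
  \<open>a\<^sup>* = k a\<close> with \<open>k = r\<^sup>2 / |a|\<^sup>2 \<le> 1\<close>; then
  \<open>k |a - b|\<^sup>2 - |k a - b|\<^sup>2 = (1 - k) (r\<^sup>2 - |b|\<^sup>2) \<ge> 0\<close>, i.e. \<open>|a\<^sup>* - b| \<le> (r / |a|) |a - b|\<close>.\<close>

definition sphere_inversion :: "real \<Rightarrow> 'a::real_inner \<Rightarrow> 'a" where
  "sphere_inversion r x = (r\<^sup>2 / (norm x)\<^sup>2) *\<^sub>R x"

lemma norm_diff_squared:
  fixes a b :: "'a::real_inner"
  shows "(norm (a - b))\<^sup>2 = (norm a)\<^sup>2 - 2 * inner a b + (norm b)\<^sup>2"
  by (simp add: power2_norm_eq_inner inner_diff inner_commute)

lemma norm_sphere_inversion_diff: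
  fixes a b :: "'a::real_inner"
  assumes "0 \<le> r" "a \<noteq> 0" "b \<noteq> 0"
  shows "norm (sphere_inversion r a - sphere_inversion r b) = r / norm a * (r / norm b) * norm (a - b)"
proof -
  define s t where "s = r\<^sup>2 / (norm a)\<^sup>2" and "t = r\<^sup>2 / (norm b)\<^sup>2"
  have "(norm (s *\<^sub>R a - t *\<^sub>R b))\<^sup>2 = s\<^sup>2 * (norm a)\<^sup>2 - 2 * s * t * inner a b + t\<^sup>2 * (norm b)\<^sup>2"
    by (simp add: norm_diff_squared power_mult_distrib)
  also have "\<dots> = (r / norm a * (r / norm b))\<^sup>2 * ((norm a)\<^sup>2 - 2 * inner a b + (norm b)\<^sup>2)"
    using assms by (simp add: s_def t_def field_simps power2_eq_square)
  also have "\<dots> = (r / norm a * (r / norm b) * norm (a - b))\<^sup>2"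
    unfolding power_mult_distrib[of _ "norm (a - b)"] norm_diff_squared ..
  finally show ?thesis
    using assms(1) by (simp add: sphere_inversion_def s_def t_def power2_eq_iff_nonneg)
qed

lemma norm_shrunk_diff_le:
  fixes a b :: "'a::real_inner"
  assumes "k * (norm a)\<^sup>2 = r\<^sup>2" "norm b \<le> r" "0 \<le> k" "k \<le> 1"
  shows "(norm (k *\<^sub>R a - b))\<^sup>2 \<le> k * (norm (a - b))\<^sup>2"
proof -
  have "0 \<le> r" using assms(2) norm_ge_zero order_trans by blast
  then have "(norm b)\<^sup>2 \<le> r\<^sup>2" using assms(2) by (simp add: power_mono)
  then have "0 \<le> (1 - k) * (r\<^sup>2 - (norm b)\<^sup>2)" using assms(4) by simp
  also have "\<dots> = k * (norm (a - b))\<^sup>2 - (norm (k *\<^sub>R a - b))\<^sup>2"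
  proof -
    have "(norm (k *\<^sub>R a))\<^sup>2 = k * (k * (norm a)\<^sup>2)"
      using assms(3) by (simp add: power_mult_distrib power2_eq_square)
    then have "(norm (k *\<^sub>R a))\<^sup>2 = k * r\<^sup>2" using assms(1) by simp
    moreover have "k * (norm (a - b))\<^sup>2 = r\<^sup>2 - 2 * (k * inner a b) + k * (norm b)\<^sup>2"
      unfolding norm_diff_squared using assms(1) by (simp add: ring_distribs)
    ultimately show ?thesis
      unfolding norm_diff_squared[of "k *\<^sub>R a"] inner_scaleR_left by (simp add: ring_distribs)
  qed
  finally show ?thesis by simp
qed

lemma norm_sphere_inversion_diff_inside:
  fixes a b :: "'a::real_inner"
  assumes "0 \<le> r" "r < norm a" "norm b \<le> r"
  shows "norm (sphere_inversion r a - b) \<le> r / norm a * norm (a - b)"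
proof -
  define k where "k = r\<^sup>2 / (norm a)\<^sup>2"
  have "0 < norm a" using assms by linarith
  then have k: "k * (norm a)\<^sup>2 = r\<^sup>2" by (simp add: k_def)
  have "r\<^sup>2 < (norm a)\<^sup>2" using assms by (simp add: power_strict_mono)
  then have "k \<le> 1" unfolding k_def by (simp add: divide_le_eq_1)
  have "(norm (sphere_inversion r a - b))\<^sup>2 \<le> k * (norm (a - b))\<^sup>2"
    unfolding sphere_inversion_def k_def[symmetric]
    using norm_shrunk_diff_le[OF k assms(3) _ \<open>k \<le> 1\<close>] by (simp add: k_def)
  also have "\<dots> = (r / norm a * norm (a - b))\<^sup>2"
    by (simp add: k_def power_mult_distrib power_divide)
  finally show ?thesis
    by (rule power2_le_imp_le) (use assms(1) in simp)
qed

definition sphere_fold :: "real \<Rightarrow> 'a::real_inner \<Rightarrow> 'a" where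
  "sphere_fold r x = (if r < norm x then sphere_inversion r x else x)"

lemma min_1_divide_norm:
  fixes x :: "'a::real_normed_vector"
  assumes "x \<noteq> 0"
  shows "min 1 (r / norm x) = (if r < norm x then r / norm x else 1)"
  using assms by (simp add: min_def divide_le_eq_1)

lemma norm_sphere_inversion_fold_diff:
  fixes a b :: "'a::real_inner"
  assumes "0 \<le> r" "r < norm a" "b \<noteq> 0"
  shows "norm (sphere_inversion r a - sphere_fold r b) \<le> r / norm a * min 1 (r / norm b) * norm (a - b)"
proof (cases "r < norm b")
  case True
  moreover have "a \<noteq> 0" using assms(1,2) by auto
  ultimately show ?thesis
    using assms norm_sphere_inversion_diff[of r a b] by (simp add: sphere_fold_def min_1_divide_norm)
next
  case False
  then show ?thesis
    using assms norm_sphere_inversion_diff_inside[of r a b] by (simp add: sphere_fold_def min_1_divide_norm)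
qed

theorem norm_sphere_fold_diff_le:
  fixes a b :: "'a::real_inner"
  assumes "0 \<le> r" "a \<noteq> 0" "b \<noteq> 0"
  shows "norm (sphere_fold r a - sphere_fold r b) \<le> min 1 (r / norm a) * min 1 (r / norm b) * norm (a - b)"
proof (cases "r < norm a")
  case True
  then show ?thesis
    using assms norm_sphere_inversion_fold_diff[of r a b] by (simp add: sphere_fold_def min_1_divide_norm)
next
  case a_inside: False
  show ?thesis
  proof (cases "r < norm b")
    case True
    then show ?thesis
      using assms a_inside norm_sphere_inversion_fold_diff[of r b a]
      by (simp add: sphere_fold_def min_1_divide_norm norm_minus_commute)
  next
    case False
    then show ?thesis using assms a_inside by (simp add: sphere_fold_def min_1_divide_norm)
  qed
qed

lemma of_real_divide_cnj:
  fixes w :: complex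
  shows "complex_of_real s / cnj w = (s / (cmod w)\<^sup>2) *\<^sub>R w"
  by (simp add: complex_div_cnj[of _ "cnj w"] scaleR_conv_of_real)

lemma tau_eq_sphere_fold: "tau c z = sphere_fold (refl_radius c) (z - c) + c"
  by (simp add: tau_def sphere_fold_def sphere_inversion_def of_real_divide_cnj[symmetric])

theorem mainTheorem5:
  fixes c x y :: complex
  assumes "cmod c > 1" and "cmod x = 1" and "cmod y = 1"
  shows "cmod (tau c x - tau c y)
           \<le> min 1 (refl_radius c / cmod (x - c)) * min 1 (refl_radius c / cmod (y - c)) * cmod (x - y)
       \<and> min 1 (refl_radius c / cmod (x - c)) * min 1 (refl_radius c / cmod (y - c)) * cmod (x - y)
           \<le> cmod (x - y)"
proof
  let ?r = "refl_radius c"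
  have "0 \<le> ?r" using assms(1) by (simp add: refl_radius_def one_le_power)
  moreover have "x - c \<noteq> 0" "y - c \<noteq> 0" using assms by auto
  ultimately show "cmod (tau c x - tau c y)
      \<le> min 1 (?r / cmod (x - c)) * min 1 (?r / cmod (y - c)) * cmod (x - y)"
    using norm_sphere_fold_diff_le[of ?r "x - c" "y - c"] by (simp add: tau_eq_sphere_fold)
  have "0 \<le> min 1 (?r / cmod (x - c)) * min 1 (?r / cmod (y - c))"
    "min 1 (?r / cmod (x - c)) * min 1 (?r / cmod (y - c)) \<le> 1"
    using \<open>0 \<le> ?r\<close> by (simp_all add: mult_le_one)
  then show "min 1 (?r / cmod (x - c)) * min 1 (?r / cmod (y - c)) * cmod (x - y) \<le> cmod (x - y)"
    by (simp add: mult_left_le_one_le)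
qed

end
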